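(* Let $k$ be a field and $\mu=\nu=(4,2)$. Then the matrix problem $\mathcal{P}_k(\mu,\nu)$ has at least $|k^\times|$ orbits; in particular it has infinitely many orbits whenever $k$ is infinite (i.e. it is of infinite type).
   Context: For partitions $\mu$ of $m$ and $\nu$ of $n$ and a field $k$, the matrix problem $\mathcal{P}_k(\mu,\nu)$ is the action of the group $C_{GL_m(k)}(J_\mu(0)) \times C_{GL_n(k)}(J_\nu(0))$ on the quotient space $Q = M_{m,n}(k)/\{wJ_\nu(0) - J_\mu(0)w : w\in M_{m,n}(k)\}$ given by $(X,Y)\cdot[v] = [XvY^{-1}]$. Here $J_r(0)$ is the $r\times r$ matrix with $1$ in each $(i+1,i)$ entry and $0$ elsewhere, and $J_\mu(0) = \bigoplus_i J_{\mu_i}(0)$. (Equivalently, $Q$ is the space of $s\times t$ matrices with $(i,j)$ entry in $k[x]/(x^{\min(\mu_i,\nu_j)})$, acted on by the unit groups of $k[x]_\mu$ and $k[x]_\nu$.) *)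

theory Defs
  imports "Jordan_Normal_Form.Matrix"
begin

definition nilJ :: "nat \<Rightarrow> 'a::{zero,one} mat" where
  "nilJ r = mat r r (\<lambda>(i,j). if i = Suc j then 1 else 0)"

definition Jpart :: "nat list \<Rightarrow> 'a::{zero,one} mat" where
  "Jpart mu = diag_block_mat (map nilJ mu)"

definition centralizer_GL :: "nat \<Rightarrow> 'a::comm_ring_1 mat \<Rightarrow> 'a mat set" where
  "centralizer_GL n A = {X \<in> carrier_mat n n. invertible_mat X \<and> X * A = A * X}"

definition comm_space :: "nat list \<Rightarrow> nat list \<Rightarrow> 'a::comm_ring_1 mat set" where
  "comm_space mu nu =
     {w * Jpart nu - Jpart mu * w | w. w \<in> carrier_mat (sum_list mu) (sum_list nu)}"

text \<open>Orbit relation of P_k(mu,nu), lifted to representatives v in M_{m,n}(k):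
  [v'] lies in the orbit of [v] iff [v'] = [X v Y^{-1}] for X, Y in the centralizers.\<close>
definition P_orbit_rel :: "nat list \<Rightarrow> nat list \<Rightarrow> ('a::comm_ring_1 mat \<times> 'a mat) set" where
  "P_orbit_rel mu nu =
     {(v, v'). v \<in> carrier_mat (sum_list mu) (sum_list nu) \<and>
               v' \<in> carrier_mat (sum_list mu) (sum_list nu) \<and>
               (\<exists>X Y Yinv. X \<in> centralizer_GL (sum_list mu) (Jpart mu) \<and>
                           Y \<in> centralizer_GL (sum_list nu) (Jpart nu) \<and>
                           Yinv \<in> carrier_mat (sum_list nu) (sum_list nu) \<and>
                           Y * Yinv = 1\<^sub>m (sum_list nu) \<and>
                           X * v * Yinv - v' \<in> comm_space mu nu)}"

definition P_orbits :: "nat list \<Rightarrow> nat list \<Rightarrow> 'a::comm_ring_1 mat set set" where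
  "P_orbits mu nu = carrier_mat (sum_list mu) (sum_list nu) // P_orbit_rel mu nu"

end

theory Submission
  imports Defs "Jordan_Normal_Form.Determinant"
begin

text \<open>Indices 0..3 and 4..5 are the two Jordan chains of \<open>J42 = J_{(4,2)}(0)\<close>, and
  \<open>rep42 l = E_01 + E_04 + E_42 + l E_45\<close>. If \<open>rep42 m\<close> lies in the orbit of \<open>rep42 l\<close>,
  then \<open>X (rep42 l) - (rep42 m) Y = W J42 - J42 W\<close> for some \<open>W\<close> and some invertible \<open>X, Y\<close>
  commuting with \<open>J42\<close>. Four linear functionals, sums along diagonals of the blocks, vanish on
  every \<open>W J42 - J42 W\<close>. Matrices commuting with \<open>J42\<close> have triangular Toeplitz blocks, so the
  functionals give \<open>X_00 = Y_00 = X_44 = Y_44\<close> and \<open>l X_44 = m Y_44\<close>. The first row of \<open>Y\<close> is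
  \<open>Y_00 e_0\<close>, so \<open>Y_00 \<noteq> 0\<close> by invertibility, and hence \<open>l = m\<close>.\<close>

lemma Jpart_carrier: "Jpart mu \<in> carrier_mat (sum_list mu) (sum_list mu)"
proof (rule carrier_matI)
  show "dim_row (Jpart mu) = sum_list mu" "dim_col (Jpart mu) = sum_list mu"
    unfolding Jpart_def dim_diag_block_mat by (induct mu) (simp_all add: nilJ_def)
qed

lemma invertible_one_mat: "invertible_mat (1\<^sub>m n)"
  unfolding invertible_mat_def inverts_mat_def by (intro conjI exI[of _ "1\<^sub>m n"]) simp_all

lemma one_mem_centralizer_GL:
  assumes "A \<in> carrier_mat n n"
  shows "1\<^sub>m n \<in> centralizer_GL n A"
  unfolding centralizer_GL_def
  using assms invertible_one_mat by simp

lemma P_orbit_rel_refl: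
  fixes v :: "'a::comm_ring_1 mat"
  assumes v: "v \<in> carrier_mat (sum_list mu) (sum_list nu)"
  shows "(v, v) \<in> P_orbit_rel mu nu"
proof -
  let ?m = "sum_list mu" and ?n = "sum_list nu"
  have "v - v = 0\<^sub>m ?m ?n - 0\<^sub>m ?m ?n"
    using v by (intro eq_matI) auto
  also have "\<dots> = 0\<^sub>m ?m ?n * Jpart nu - Jpart mu * 0\<^sub>m ?m ?n"
    by (simp only: left_mult_zero_mat[OF Jpart_carrier] right_mult_zero_mat[OF Jpart_carrier])
  finally have "v - v = 0\<^sub>m ?m ?n * Jpart nu - Jpart mu * 0\<^sub>m ?m ?n" .
  moreover have "1\<^sub>m ?m * v * 1\<^sub>m ?n = v"
    using v by simp
  ultimately have "1\<^sub>m ?m * v * 1\<^sub>m ?n - v \<in> comm_space mu nu"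
    unfolding comm_space_def by (intro CollectI exI[of _ "0\<^sub>m ?m ?n"]) simp
  then show ?thesis
    unfolding P_orbit_rel_def using v one_mem_centralizer_GL[OF Jpart_carrier]
    by (intro CollectI case_prodI conjI exI[of _ "1\<^sub>m ?m"] exI[of _ "1\<^sub>m ?n"]) simp_all
qed

lemma commutator_mult_right:
  fixes w :: "'a::comm_ring_1 mat"
  assumes A: "A \<in> carrier_mat m m" and B: "B \<in> carrier_mat n n" and w: "w \<in> carrier_mat m n"
    and Y: "Y \<in> carrier_mat n n" and YB: "Y * B = B * Y"
  shows "(w * B - A * w) * Y = (w * Y) * B - A * (w * Y)"
proof -
  have "(w * B - A * w) * Y = w * B * Y - A * w * Y"
    using A B w Y by (intro minus_mult_distrib_mat) auto
  also have "w * B * Y = (w * Y) * B"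
    using B w Y YB by simp
  also have "A * w * Y = A * (w * Y)"
    using A w Y by simp
  finally show ?thesis .
qed

lemma P_orbit_rel_commutator:
  fixes v v' :: "'a::field mat"
  assumes "(v, v') \<in> P_orbit_rel mu nu"
  obtains X Y Yinv where
    "X \<in> centralizer_GL (sum_list mu) (Jpart mu)" "Y \<in> centralizer_GL (sum_list nu) (Jpart nu)"
    "Yinv \<in> carrier_mat (sum_list nu) (sum_list nu)" "Y * Yinv = 1\<^sub>m (sum_list nu)"
    "X * v - v' * Y \<in> comm_space mu nu"
proof -
  let ?m = "sum_list mu" and ?n = "sum_list nu"
  from assms obtain X Y Yinv w where
    v: "v \<in> carrier_mat ?m ?n" "v' \<in> carrier_mat ?m ?n" and
    XC: "X \<in> centralizer_GL ?m (Jpart mu)" and YC: "Y \<in> centralizer_GL ?n (Jpart nu)" and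
    Yinv: "Yinv \<in> carrier_mat ?n ?n" "Y * Yinv = 1\<^sub>m ?n" and
    w: "w \<in> carrier_mat ?m ?n" and
    H: "X * v * Yinv - v' = w * Jpart nu - Jpart mu * w"
    unfolding P_orbit_rel_def comm_space_def by blast
  have X: "X \<in> carrier_mat ?m ?m" and Y: "Y \<in> carrier_mat ?n ?n" "Y * Jpart nu = Jpart nu * Y"
    using XC YC unfolding centralizer_GL_def by auto
  have "(X * v * Yinv - v') * Y = X * v * Yinv * Y - v' * Y"
    using X v Y Yinv by (subst minus_mult_distrib_mat[of _ ?m ?n]) auto
  also have "X * v * Yinv * Y = X * v * (Yinv * Y)"
    using X v Y Yinv by (intro assoc_mult_mat[of _ ?m ?n]) auto
  also have "Yinv * Y = 1\<^sub>m ?n"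
    by (rule mat_mult_left_right_inverse[OF Y(1) Yinv])
  also have "X * v * 1\<^sub>m ?n = X * v"
    using X v by simp
  finally have "X * v - v' * Y = (w * Jpart nu - Jpart mu * w) * Y"
    unfolding H by simp
  also have "\<dots> = (w * Y) * Jpart nu - Jpart mu * (w * Y)"
    using w Y by (intro commutator_mult_right[OF Jpart_carrier Jpart_carrier])
  finally have "X * v - v' * Y \<in> comm_space mu nu"
    unfolding comm_space_def using w Y by auto
  with XC YC Yinv that show ?thesis by blast
qed

lemma right_invertible_row_entry_nonzero:
  fixes Y :: "'a::field mat"
  assumes Y: "Y \<in> carrier_mat n n" and Z: "Z \<in> carrier_mat n n" and YZ: "Y * Z = 1\<^sub>m n"
    and ij: "i < n" "j < n" and row: "\<And>k. k < n \<Longrightarrow> k \<noteq> j \<Longrightarrow> Y $$ (i, k) = 0"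
  shows "Y $$ (i, j) \<noteq> 0"
proof -
  have "1 = (Y * Z) $$ (i, i)"
    using YZ ij by simp
  also have "\<dots> = (\<Sum>k\<in>{0..<n}. Y $$ (i, k) * Z $$ (k, i))"
    using Y Z ij by (simp add: scalar_prod_def)
  also have "\<dots> = Y $$ (i, j) * Z $$ (j, i)"
    using ij row by (subst sum.remove[of _ j]) auto
  finally show ?thesis by auto
qed

definition J42 :: "'a::{zero,one} mat" where
  "J42 = mat 6 6 (\<lambda>(i, j). if i = Suc j \<and> j \<noteq> 3 then 1 else 0)"

lemma Jpart_42: "Jpart [4, 2] = J42"
  unfolding Jpart_def nilJ_def J42_def by (rule eq_matI) (auto simp: Let_def)

lemma sum_atLeastLessThan_6:
  "(\<Sum>k\<in>{0..<6::nat}. f k) = f 0 + f 1 + f 2 + f 3 + f 4 + (f 5 :: 'a::comm_monoid_add)"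
  by (simp add: eval_nat_numeral atLeast0_lessThan_Suc add_ac)

lemma index_mult_J42:
  assumes "(X :: 'a::comm_ring_1 mat) \<in> carrier_mat 6 6" "i < 6" "j < 6"
  shows "(X * J42) $$ (i, j) = (if j < 5 \<and> j \<noteq> 3 then X $$ (i, Suc j) else 0)"
  using assms by (auto simp: J42_def scalar_prod_def sum_atLeastLessThan_6 less_Suc_eq eval_nat_numeral)

lemma index_J42_mult:
  assumes "(X :: 'a::comm_ring_1 mat) \<in> carrier_mat 6 6" "i < 6" "j < 6"
  shows "(J42 * X) $$ (i, j) = (if 0 < i \<and> i \<noteq> 4 then X $$ (i - 1, j) else 0)"
  using assms by (auto simp: J42_def scalar_prod_def sum_atLeastLessThan_6 less_Suc_eq eval_nat_numeral)

lemma commute_J42_entries: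
  assumes X: "(X :: 'a::comm_ring_1 mat) \<in> carrier_mat 6 6" and XJ: "X * J42 = J42 * X"
  shows "X $$ (1, 1) = X $$ (0, 0)" "X $$ (2, 2) = X $$ (0, 0)" "X $$ (5, 5) = X $$ (4, 4)"
    "X $$ (1, 4) = 0" "X $$ (2, 5) = 0" "X $$ (4, 1) = 0" "X $$ (5, 2) = 0"
    "\<And>k. 0 < k \<Longrightarrow> k < 6 \<Longrightarrow> X $$ (0, k) = 0"
proof -
  have e: "(if j < 5 \<and> j \<noteq> 3 then X $$ (i, Suc j) else 0) = (if 0 < i \<and> i \<noteq> 4 then X $$ (i - 1, j) else 0)"
    if "i < 6" "j < 6" for i j
    using index_mult_J42[OF X that] index_J42_mult[OF X that] XJ by metis
  show "X $$ (1, 1) = X $$ (0, 0)" "X $$ (2, 2) = X $$ (0, 0)" "X $$ (5, 5) = X $$ (4, 4)"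
    "X $$ (1, 4) = 0" "X $$ (2, 5) = 0" "X $$ (4, 1) = 0" "X $$ (5, 2) = 0"
    using e[of 1 0] e[of 2 1] e[of 5 4] e[of 2 4] e[of 3 5] e[of 4 0] e[of 5 1]
    by (simp_all add: numeral_eq_Suc)
  show "X $$ (0, k) = 0" if "0 < k" "k < 6" for k
  proof -
    have "k = 1 \<or> k = 2 \<or> k = 3 \<or> k = 4 \<or> k = 5"
      using that by auto
    then show ?thesis
      using e[of 0 0] e[of 0 1] e[of 0 2] e[of 0 4] e[of 1 4] e[of 2 5]
      by (auto simp: numeral_eq_Suc)
  qed
qed

lemma J42_commutator_invariants:
  assumes W: "(W :: 'a::comm_ring_1 mat) \<in> carrier_mat 6 6" and D: "D = W * J42 - J42 * W"
  shows "D $$ (0, 1) + D $$ (1, 2) + D $$ (2, 3) = 0" "D $$ (0, 4) + D $$ (1, 5) = 0"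
    "D $$ (4, 2) + D $$ (5, 3) = 0" "D $$ (4, 5) = 0"
proof -
  have "D $$ (i, j) = (if j < 5 \<and> j \<noteq> 3 then W $$ (i, Suc j) else 0)
      - (if 0 < i \<and> i \<noteq> 4 then W $$ (i - 1, j) else 0)" if "i < 6" "j < 6" for i j
  proof -
    have "D $$ (i, j) = (W * J42) $$ (i, j) - (J42 * W) $$ (i, j)"
      using W that unfolding D J42_def by (intro index_minus_mat) auto
    then show ?thesis
      by (simp only: index_mult_J42[OF W that] index_J42_mult[OF W that])
  qed
  then show "D $$ (0, 1) + D $$ (1, 2) + D $$ (2, 3) = 0" "D $$ (0, 4) + D $$ (1, 5) = 0"
    "D $$ (4, 2) + D $$ (5, 3) = 0" "D $$ (4, 5) = 0"
    by (simp_all add: numeral_eq_Suc)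
qed

definition rep42 :: "'a::field \<Rightarrow> 'a mat" where
  "rep42 l = mat 6 6 (\<lambda>(i, j). if (i, j) \<in> {(0, 1), (0, 4), (4, 2)} then 1
                               else if (i, j) = (4, 5) then l else 0)"

lemma rep42_carrier: "rep42 l \<in> carrier_mat 6 6"
  by (simp add: rep42_def)

lemma index_mult_rep42:
  assumes "X \<in> carrier_mat 6 6" "i < 6" "j < 6"
  shows "(X * rep42 l) $$ (i, j) = (if j = 1 \<or> j = 4 then X $$ (i, 0) else if j = 2 then X $$ (i, 4)
      else if j = 5 then l * X $$ (i, 4) else 0)"
  using assms by (auto simp: rep42_def scalar_prod_def sum_atLeastLessThan_6 less_Suc_eq eval_nat_numeral)

lemma index_rep42_mult:
  assumes "Y \<in> carrier_mat 6 6" "i < 6" "j < 6"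
  shows "(rep42 m * Y) $$ (i, j) = (if i = 0 then Y $$ (1, j) + Y $$ (4, j)
      else if i = 4 then Y $$ (2, j) + m * Y $$ (5, j) else 0)"
  using assms by (auto simp: rep42_def scalar_prod_def sum_atLeastLessThan_6 less_Suc_eq eval_nat_numeral)

lemma rep42_orbit_invariant:
  assumes "(rep42 l, rep42 m) \<in> P_orbit_rel [4, 2] [4, 2]"
  shows "l = m"
proof -
  have six: "sum_list [4, 2 :: nat] = 6" by simp
  obtain X Y Yinv where
    XC: "X \<in> centralizer_GL 6 J42" and YC: "Y \<in> centralizer_GL 6 J42" and
    Yinv: "Yinv \<in> carrier_mat 6 6" "Y * Yinv = 1\<^sub>m 6" and
    D: "X * rep42 l - rep42 m * Y \<in> comm_space [4, 2] [4, 2]"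
    using P_orbit_rel_commutator[OF assms] unfolding six Jpart_42 by metis
  have X: "X \<in> carrier_mat 6 6" "X * J42 = J42 * X" and Y: "Y \<in> carrier_mat 6 6" "Y * J42 = J42 * Y"
    using XC YC unfolding centralizer_GL_def by auto
  obtain W where W: "W \<in> carrier_mat 6 6" and
    DW: "X * rep42 l - rep42 m * Y = W * J42 - J42 * W"
    using D unfolding comm_space_def six Jpart_42 by auto
  note inv = J42_commutator_invariants[OF W DW]
  have "(X * rep42 l - rep42 m * Y) $$ (i, j) = (X * rep42 l) $$ (i, j) - (rep42 m * Y) $$ (i, j)"
    if "i < 6" "j < 6" for i j
    using Y that by (intro index_minus_mat) (auto simp: rep42_def)
  note D_entries = this index_mult_rep42[OF X(1)] index_rep42_mult[OF Y(1)]
  note SX = commute_J42_entries[OF X] and SY = commute_J42_entries[OF Y]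
  have "X $$ (0, 0) = Y $$ (0, 0)"
    using inv(1) SX SY by (simp add: D_entries)
  moreover have "X $$ (0, 0) = Y $$ (4, 4)"
    using inv(2) SX SY by (simp add: D_entries)
  moreover have "X $$ (4, 4) = Y $$ (0, 0)"
    using inv(3) SX SY by (simp add: D_entries)
  moreover have "l * X $$ (4, 4) = m * Y $$ (4, 4)"
    using inv(4) SX SY by (simp add: D_entries)
  moreover have "Y $$ (0, 0) \<noteq> 0"
    using right_invertible_row_entry_nonzero[OF Y(1) Yinv] SY(8) by auto
  ultimately show "l = m" by simp
qed

theorem mainTheorem7:
  shows "(\<exists>f :: 'k::field \<Rightarrow> 'k mat set.
            inj_on f (UNIV - {0}) \<and> f ` (UNIV - {0}) \<subseteq> P_orbits [4,2] [4,2])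
         \<and> (infinite (UNIV :: 'k set) \<longrightarrow> infinite (P_orbits [4,2] [4,2] :: 'k mat set set))"
proof -
  define f :: "'k \<Rightarrow> 'k mat set" where "f l = P_orbit_rel [4, 2] [4, 2] `` {rep42 l}" for l
  have rep42_carrier': "rep42 l \<in> carrier_mat (sum_list [4, 2]) (sum_list [4, 2])" for l :: 'k
    using rep42_carrier by simp
  have inj: "inj f"
  proof (rule injI)
    fix l m :: 'k
    assume "f l = f m"
    then have "(rep42 l, rep42 m) \<in> P_orbit_rel [4, 2] [4, 2]"
      using P_orbit_rel_refl[OF rep42_carrier'] unfolding f_def by blast
    then show "l = m" by (rule rep42_orbit_invariant)
  qed
  have orbits: "range f \<subseteq> P_orbits [4, 2] [4, 2]"
    unfolding f_def P_orbits_def using rep42_carrier' by (auto intro: quotientI)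
  show ?thesis
  proof (intro conjI exI impI)
    show "inj_on f (UNIV - {0})"
      using inj by (rule inj_on_subset) simp
    show "f ` (UNIV - {0}) \<subseteq> P_orbits [4, 2] [4, 2]"
      using orbits by blast
    assume "infinite (UNIV :: 'k set)"
    then show "infinite (P_orbits [4, 2] [4, 2] :: 'k mat set set)"
      using finite_subset[OF orbits] finite_imageD[OF _ inj] by blast
  qed
qed

end
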